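(* Let $X$ and $Y$ be finite sets with $|Y| = n$, let $I = X \cap Y$, and let $p \in [1/2, 1]$. Define two random variables as follows. (1) (Mechanism $\mathcal M_Y$.) Include each element $y \in Y$ in a random subset $Y_{\mathrm{sub}} \subseteq Y$ independently with probability $p$, and set $Z = |X \cap Y_{\mathrm{sub}}|$. (2) (Mechanism $\mathcal M'_Y$.) Sample $s \sim \mathrm{Bin}(n, 2(1-p))$; then choose $T$ uniformly at random among all subsets of $Y$ of cardinality $s$; then, independently for each $y \in I \cap T$, flip a fair coin $c_y \sim \mathrm{Ber}(1/2)$; set $Z' = |I \setminus T| + \sum_{y \in I \cap T} c_y$. Then $Z$ and $Z'$ have the same probability mass function: $\Pr[Z = z] = \Pr[Z' = z]$ for all integers $z \ge 0$.
   Context: $\mathrm{Ber}(r)$ denotes a Bernoulli random variable with success probability $r$, and $\mathrm{Bin}(m, r)$ a binomial random variable with $m$ trials and success probability $r$. All random choices are independent unless stated otherwise. *)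

theory Defs
  imports "HOL-Probability.Probability"
begin

definition mech_M :: "'a set \<Rightarrow> 'a set \<Rightarrow> real \<Rightarrow> nat pmf" where
  "mech_M X Y p =
     map_pmf (\<lambda>b. card (X \<inter> {y \<in> Y. b y})) (Pi_pmf Y False (\<lambda>_. bernoulli_pmf p))"

definition mech_M' :: "'a set \<Rightarrow> 'a set \<Rightarrow> real \<Rightarrow> nat pmf" where
  "mech_M' X Y p =
     do {
       s \<leftarrow> binomial_pmf (card Y) (2 * (1 - p));
       T \<leftarrow> pmf_of_set {T. T \<subseteq> Y \<and> card T = s};
       c \<leftarrow> Pi_pmf (X \<inter> Y \<inter> T) False (\<lambda>_. bernoulli_pmf (1/2));
       return_pmf (card ((X \<inter> Y) - T) + card {y \<in> X \<inter> Y \<inter> T. c y})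
     }"

end

theory Submission
  imports Defs
begin

text \<open>
  Choosing \<open>s \<sim> Bin(n, q)\<close> and then a uniform \<open>s\<close>-subset \<open>T\<close> of \<open>Y\<close> is the same as
  putting every element of \<open>Y\<close> into \<open>T\<close> independently with probability \<open>q = 2(1 - p)\<close>,
  because a random subset of this kind is uniform once its size is fixed. Extending the fair
  coins to all of \<open>Y\<close>, an element of \<open>I\<close> is counted by \<open>M'\<^sub>Y\<close> iff it is not in \<open>T\<close> or its coin
  shows heads. This happens independently for each element, with probability
  \<open>(1 - q) + q/2 = p\<close>, which is exactly the mechanism \<open>M\<^sub>Y\<close>.
\<close>

definition random_subset :: "'a set \<Rightarrow> real \<Rightarrow> 'a set pmf" where
  "random_subset A q = map_pmf (\<lambda>b. {x \<in> A. b x}) (Pi_pmf A False (\<lambda>_. bernoulli_pmf q))"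

lemma pmf_random_subset:
  assumes "finite A" and "0 \<le> q" and "q \<le> 1"
  shows "pmf (random_subset A q) B =
           (if B \<subseteq> A then q ^ card B * (1 - q) ^ (card A - card B) else 0)"
proof (cases "B \<subseteq> A")
  case True
  have "(\<lambda>b. {x \<in> A. b x}) -` {B} = Pi A (\<lambda>x. {x \<in> B})"
    using True by auto
  then have "pmf (random_subset A q) B = (\<Prod>x\<in>A. measure_pmf.prob (bernoulli_pmf q) {x \<in> B})"
    using assms(1) by (simp add: random_subset_def pmf_map measure_Pi_pmf_Pi)
  also have "\<dots> = (\<Prod>x\<in>B. q) * (\<Prod>x\<in>A - B. 1 - q)"
    using assms True by (simp add: prod.subset_diff[OF True] measure_pmf_single mult.commute)
  finally show ?thesis
    using True assms(1) by (simp add: card_Diff_subset finite_subset)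
next
  case False
  then have "(\<lambda>b. {x \<in> A. b x}) -` {B} = {}"
    by auto
  then show ?thesis
    using False by (simp add: random_subset_def pmf_map)
qed

lemma pmf_of_set_subsets_with_card:
  assumes "finite A" and "k \<le> card A"
  shows "pmf (pmf_of_set {B. B \<subseteq> A \<and> card B = k}) C =
           (if C \<subseteq> A \<and> card C = k then 1 / real (card A choose k) else 0)"
proof -
  have "finite {B. B \<subseteq> A \<and> card B = k}"
    using assms(1) by (rule finite_subset[rotated, OF finite_Pow_iff[THEN iffD2]]) auto
  moreover have "{B. B \<subseteq> A \<and> card B = k} \<noteq> {}"
    using obtain_subset_with_card_n[OF assms(2)] by blast
  ultimately show ?thesis
    using assms(1) by (simp add: n_subsets)
qed

lemma random_subset_conv_binomial:
  assumes "finite A" and "0 \<le> q" and "q \<le> 1"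
  shows "random_subset A q =
           do {k \<leftarrow> binomial_pmf (card A) q; pmf_of_set {B. B \<subseteq> A \<and> card B = k}}"
proof (rule pmf_eqI)
  fix C
  let ?U = "\<lambda>k. pmf_of_set {B. B \<subseteq> A \<and> card B = k}"
  have le: "k \<le> card A" if "k \<in> set_pmf (binomial_pmf (card A) q)" for k
    using that assms(2,3) by (auto simp: set_pmf_binomial_eq split: if_splits)
  have "pmf (binomial_pmf (card A) q \<bind> ?U) C =
          (\<Sum>k\<in>(if C \<subseteq> A then {card C} else {}). pmf (?U k) C * pmf (binomial_pmf (card A) q) k)"
    unfolding pmf_bind
    by (rule integral_measure_pmf_real)
       (auto simp: pmf_of_set_subsets_with_card[OF assms(1) le] split: if_splits)
  also have "\<dots> = pmf (random_subset A q) C"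
  proof (cases "C \<subseteq> A")
    case True
    moreover from True assms(1) have "card C \<le> card A"
      by (rule card_mono[rotated])
    ultimately show ?thesis
      using assms by (simp add: pmf_random_subset pmf_of_set_subsets_with_card)
  qed (use assms in \<open>simp add: pmf_random_subset\<close>)
  finally show "pmf (random_subset A q) C = pmf (binomial_pmf (card A) q \<bind> ?U) C"
    by simp
qed

lemma card_Diff_add_card_filter:
  assumes "finite I"
  shows "card (I - T) + card {y \<in> I \<inter> T. P y} = card {y \<in> I. y \<notin> T \<or> P y}"
proof -
  have "card {y \<in> I. y \<notin> T \<or> P y} = card ((I - T) \<union> {y \<in> I \<inter> T. P y})"
    by (rule arg_cong[where f = card]) blast
  also have "\<dots> = card (I - T) + card {y \<in> I \<inter> T. P y}"
    using assms by (intro card_Un_disjoint) auto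
  finally show ?thesis
    by simp
qed

lemma Pi_pmf_count_outside_or_heads:
  assumes "finite A" and "I \<subseteq> A"
  shows "do {c \<leftarrow> Pi_pmf (I \<inter> T) False P; return_pmf (card (I - T) + card {y \<in> I \<inter> T. c y})} =
           map_pmf (\<lambda>c. card {y \<in> I. y \<notin> T \<or> c y}) (Pi_pmf A False P)"
proof -
  let ?restrict = "\<lambda>c y. if y \<in> I \<inter> T then c y else False"
  have "finite I"
    using assms by (rule finite_subset[rotated])
  have count: "card (I - T) + card {y \<in> I \<inter> T. ?restrict c y} = card {y \<in> I. y \<notin> T \<or> c y}" for c
  proof -
    have "{y \<in> I \<inter> T. ?restrict c y} = {y \<in> I \<inter> T. c y}"
      by auto
    then show ?thesis
      by (simp only: card_Diff_add_card_filter[OF \<open>finite I\<close>])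
  qed
  have "Pi_pmf (I \<inter> T) False P = map_pmf ?restrict (Pi_pmf A False P)"
    using assms by (intro Pi_pmf_subset) auto
  then show ?thesis
    by (simp only: map_pmf_def[symmetric] pmf.map_comp o_def count)
qed

lemma Pi_pmf_bind_bind_return:
  assumes "finite A"
  shows "Pi_pmf A d (\<lambda>x. do {a \<leftarrow> p x; b \<leftarrow> r x; return_pmf (f x a b)}) =
           do {g \<leftarrow> Pi_pmf A da p; h \<leftarrow> Pi_pmf A db r;
               return_pmf (\<lambda>x. if x \<in> A then f x (g x) (h x) else d)}"
proof -
  have "Pi_pmf A d (\<lambda>x. do {a \<leftarrow> p x; b \<leftarrow> r x; return_pmf (f x a b)}) =
          do {g \<leftarrow> Pi_pmf A da p; Pi_pmf A d (\<lambda>x. do {b \<leftarrow> r x; return_pmf (f x (g x) b)})}"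
    using assms by (rule Pi_pmf_bind)
  also have "\<dots> = do {g \<leftarrow> Pi_pmf A da p; h \<leftarrow> Pi_pmf A db r;
                      Pi_pmf A d (\<lambda>x. return_pmf (f x (g x) (h x)))}"
    using assms by (simp add: Pi_pmf_bind[where d' = db])
  finally show ?thesis
    using assms by simp
qed

lemma bernoulli_or_fair_coin:
  assumes "0 \<le> q" and "q \<le> 1"
  shows "do {b \<leftarrow> bernoulli_pmf q; c \<leftarrow> bernoulli_pmf (1/2); return_pmf (\<not> b \<or> c)}
           = bernoulli_pmf (1 - q / 2)"
proof (rule pmf_eqI)
  fix c :: bool
  show "pmf (do {b \<leftarrow> bernoulli_pmf q; c \<leftarrow> bernoulli_pmf (1/2); return_pmf (\<not> b \<or> c)}) c
          = pmf (bernoulli_pmf (1 - q / 2)) c"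
    using assms by (cases c) (auto simp: pmf_bind)
qed

theorem lemma2:
  fixes X Y :: "'a set" and p :: real and n :: nat
  assumes "finite X" and "finite Y" and "card Y = n"
    and "1/2 \<le> p" and "p \<le> 1"
  shows "\<forall>z::nat. pmf (mech_M X Y p) z = pmf (mech_M' X Y p) z"
proof -
  define q where "q = 2 * (1 - p)"
  define I where "I = X \<inter> Y"
  have q: "0 \<le> q" "q \<le> 1" and p_eq: "p = 1 - q / 2"
    using assms by (auto simp: q_def field_simps)
  have "I \<subseteq> Y"
    by (simp add: I_def)
  let ?B = "Pi_pmf Y False (\<lambda>_. bernoulli_pmf q)"
  let ?C = "Pi_pmf Y False (\<lambda>_. bernoulli_pmf (1/2))"
  have "mech_M' X Y p = do {T \<leftarrow> random_subset Y q;
                            c \<leftarrow> Pi_pmf (I \<inter> T) False (\<lambda>_. bernoulli_pmf (1/2));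
                            return_pmf (card (I - T) + card {y \<in> I \<inter> T. c y})}"
    unfolding mech_M'_def q_def[symmetric] I_def[symmetric] random_subset_conv_binomial[OF \<open>finite Y\<close> q]
    by (simp add: bind_assoc_pmf)
  also have "\<dots> = do {b \<leftarrow> ?B; c \<leftarrow> ?C; return_pmf (card {y \<in> I. \<not> b y \<or> c y})}"
    unfolding random_subset_def bind_map_pmf Pi_pmf_count_outside_or_heads[OF \<open>finite Y\<close> \<open>I \<subseteq> Y\<close>]
    using \<open>I \<subseteq> Y\<close> by (auto simp: map_pmf_def intro!: bind_pmf_cong arg_cong[where f = card])
  also have "\<dots> = map_pmf (\<lambda>d. card {y \<in> I. d y})
      (Pi_pmf Y False (\<lambda>_. do {b \<leftarrow> bernoulli_pmf q; c \<leftarrow> bernoulli_pmf (1/2); return_pmf (\<not> b \<or> c)}))"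
    unfolding Pi_pmf_bind_bind_return[OF \<open>finite Y\<close>, where da = False and db = False]
    using \<open>I \<subseteq> Y\<close> by (auto simp: map_bind_pmf intro!: bind_pmf_cong arg_cong[where f = card])
  also have "\<dots> = map_pmf (\<lambda>d. card {y \<in> I. d y}) (Pi_pmf Y False (\<lambda>_. bernoulli_pmf p))"
    by (simp only: bernoulli_or_fair_coin[OF q] p_eq[symmetric])
  also have "\<dots> = mech_M X Y p"
    unfolding mech_M_def I_def by (intro map_pmf_cong refl arg_cong[where f = card]) auto
  finally show ?thesis
    by simp
qed

end
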